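(* Let $\mathcal H_d$ be a Hilbert space of finite dimension $d$ and let $\mathsf C=(C_1,\dots,C_n)$ be an $n$-outcome observable (POVM) on $\mathcal H_d$. Then the boundariness of $\mathsf C$ in the convex set of $n$-outcome observables on $\mathcal H_d$ equals $b(\mathsf C)=\lambda_{\min}$, where $\lambda_{\min}$ is the smallest number among all eigenvalues of all the effects $C_1,\dots,C_n$.
   Context: An $n$-outcome observable on $\mathcal H_d$ is an $n$-tuple of positive operators $(C_1,\dots,C_n)$ with $\sum_j C_j=I$; the set of these is convex under componentwise convex combinations. For a convex set $Z$ and $x,y\in Z$, the weight function is $t_y(x)=\sup\{0\leq t<1 : \frac{y-tx}{1-t}\in Z\}$, and the boundariness of $y$ is $b(y)=\inf_{x\in Z}t_y(x)$. *)

theory Defs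
  imports "Jordan_Normal_Form.Jordan_Normal_Form" "Jordan_Normal_Form.Gram_Schmidt"
begin

text \<open>Positive operator (effect candidate) on the d-dimensional complex Hilbert space C^d:
  a d x d complex matrix A with <psi, A psi> >= 0 for all psi (complex order: real and nonnegative).\<close>
definition positive_op :: "nat \<Rightarrow> complex mat \<Rightarrow> bool" where
  "positive_op d A \<longleftrightarrow> A \<in> carrier_mat d d \<and> (\<forall>v \<in> carrier_vec d. 0 \<le> (A *\<^sub>v v) \<bullet>c v)"

definition observables :: "nat \<Rightarrow> nat \<Rightarrow> (nat \<Rightarrow> complex mat) set" where
  "observables d n = {C. (\<forall>j<n. positive_op d (C j)) \<and> (\<forall>j\<ge>n. C j = 0\<^sub>m d d)
      \<and> foldr (+) (map C [0..<n]) (0\<^sub>m d d) = 1\<^sub>m d}"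

definition obs_comb :: "real \<Rightarrow> (nat \<Rightarrow> complex mat) \<Rightarrow> (nat \<Rightarrow> complex mat) \<Rightarrow> nat \<Rightarrow> complex mat" where
  "obs_comb t y x = (\<lambda>j. complex_of_real (1 / (1 - t)) \<cdot>\<^sub>m (y j - complex_of_real t \<cdot>\<^sub>m x j))"

definition weight :: "nat \<Rightarrow> nat \<Rightarrow> (nat \<Rightarrow> complex mat) \<Rightarrow> (nat \<Rightarrow> complex mat) \<Rightarrow> real" where
  "weight d n y x = Sup {t. 0 \<le> t \<and> t < 1 \<and> obs_comb t y x \<in> observables d n}"

definition boundariness :: "nat \<Rightarrow> nat \<Rightarrow> (nat \<Rightarrow> complex mat) \<Rightarrow> real" where
  "boundariness d n y = Inf (weight d n y ` observables d n)"

end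

theory Submission
  imports Defs "HOL-Analysis.Function_Topology" "HOL-Analysis.Topology_Euclidean_Space"
begin

text \<open>Let \<open>\<lambda>\<close> be the smallest eigenvalue of the effects \<open>C\<^sub>j\<close>. By the Rayleigh principle
  \<open>\<lambda> \<parallel>x\<parallel>\<^sup>2 \<le> \<langle>x, C\<^sub>j x\<rangle>\<close> for all \<open>j\<close> and \<open>x\<close>; since every effect \<open>X\<^sub>j\<close> of another observable satisfies
  \<open>X\<^sub>j \<le> I\<close>, the operators \<open>C\<^sub>j - t X\<^sub>j\<close> stay positive for \<open>t \<le> \<lambda>\<close>, so \<open>t\<^sub>C(X) \<ge> \<lambda>\<close> for every \<open>X\<close>.
  Conversely, if \<open>\<lambda>\<close> is an eigenvalue of \<open>C\<^sub>j\<^sub>0\<close>, take for \<open>X\<close> the trivial observable with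
  \<open>X\<^sub>j\<^sub>0 = I\<close>: positivity of \<open>C\<^sub>j\<^sub>0 - t I\<close> on the eigenvector forces \<open>t \<le> \<lambda>\<close>.\<close>

no_notation Finite_Cartesian_Product.vec_nth (infixl "$" 90)

section \<open>Quadratic forms on \<open>\<complex>\<^sup>d\<close>\<close>

text \<open>Vectors are modelled as functions \<open>nat \<Rightarrow> complex\<close> of which only the first \<open>d\<close>
  coordinates matter; this makes the unit sphere compact in the product topology.\<close>

definition quad_form :: "nat \<Rightarrow> complex mat \<Rightarrow> (nat \<Rightarrow> complex) \<Rightarrow> complex" where
  "quad_form d A x = (\<Sum>i<d. \<Sum>k<d. A $$ (i,k) * x k * cnj (x i))"

definition norm2 :: "nat \<Rightarrow> (nat \<Rightarrow> complex) \<Rightarrow> real" where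
  "norm2 d x = (\<Sum>i<d. (cmod (x i))^2)"

lemma quad_form_cong: "(\<And>i. i < d \<Longrightarrow> x i = y i) \<Longrightarrow> quad_form d A x = quad_form d A y"
  unfolding quad_form_def by (intro sum.cong refl) auto

lemma norm2_cong: "(\<And>i. i < d \<Longrightarrow> x i = y i) \<Longrightarrow> norm2 d x = norm2 d y"
  unfolding norm2_def by (intro sum.cong refl) auto

lemma norm2_nonneg: "0 \<le> norm2 d x"
  unfolding norm2_def by (intro sum_nonneg) auto

lemma norm2_eq_0_iff: "norm2 d x = 0 \<longleftrightarrow> (\<forall>i<d. x i = 0)"
  unfolding norm2_def by (subst sum_nonneg_eq_0_iff) auto

lemma of_real_norm2: "complex_of_real (norm2 d x) = (\<Sum>i<d. x i * cnj (x i))"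
  unfolding norm2_def of_real_sum by (intro sum.cong refl) (metis complex_norm_square)

lemma norm2_scale: "norm2 d (\<lambda>i. c * x i) = (cmod c)^2 * norm2 d x"
  unfolding norm2_def by (simp add: norm_mult power_mult_distrib sum_distrib_left)

lemma quad_form_scale:
  "quad_form d A (\<lambda>i. c * x i) = complex_of_real ((cmod c)^2) * quad_form d A x"
proof -
  have "quad_form d A (\<lambda>i. c * x i) = c * cnj c * quad_form d A x"
    unfolding quad_form_def by (simp add: sum_distrib_left mult_ac)
  then show ?thesis by (metis complex_norm_square)
qed

lemma quad_form_zero: "quad_form d (0\<^sub>m d d) x = 0"
  unfolding quad_form_def by simp

lemma quad_form_one: "quad_form d (1\<^sub>m d) x = complex_of_real (norm2 d x)"
proof -
  have "quad_form d (1\<^sub>m d) x = (\<Sum>i<d. \<Sum>k<d. if i = k then x k * cnj (x i) else 0)"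
    unfolding quad_form_def by (intro sum.cong refl) auto
  then show ?thesis by (simp add: of_real_norm2)
qed

lemma quad_form_minus:
  assumes "A \<in> carrier_mat d d" "B \<in> carrier_mat d d"
  shows "quad_form d (A - B) x = quad_form d A x - quad_form d B x"
proof -
  have "quad_form d (A - B) x =
      (\<Sum>i<d. \<Sum>k<d. A $$ (i,k) * x k * cnj (x i) - B $$ (i,k) * x k * cnj (x i))"
    unfolding quad_form_def using assms by (intro sum.cong refl) (auto simp: algebra_simps)
  then show ?thesis unfolding quad_form_def by (simp add: sum_subtractf)
qed

lemma quad_form_smult:
  assumes "A \<in> carrier_mat d d"
  shows "quad_form d (c \<cdot>\<^sub>m A) x = c * quad_form d A x"
proof -
  have "quad_form d (c \<cdot>\<^sub>m A) x = (\<Sum>i<d. \<Sum>k<d. c * (A $$ (i,k) * x k * cnj (x i)))"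
    unfolding quad_form_def using assms by (intro sum.cong refl) auto
  then show ?thesis unfolding quad_form_def by (simp add: sum_distrib_left)
qed

lemma quad_form_sum_entries:
  assumes "\<forall>i<d. \<forall>k<d. M $$ (i,k) = (\<Sum>j<n. f j $$ (i,k))"
  shows "quad_form d M x = (\<Sum>j<n. quad_form d (f j) x)"
proof -
  have "quad_form d M x = (\<Sum>i<d. \<Sum>k<d. \<Sum>j<n. f j $$ (i,k) * x k * cnj (x i))"
    unfolding quad_form_def using assms by (intro sum.cong refl) (auto simp: sum_distrib_right)
  then show ?thesis unfolding quad_form_def by (simp add: sum.swap[of _ "{..<n}"])
qed

lemma cscalar_prod_mult_mat_vec:
  assumes "A \<in> carrier_mat d d" and "v \<in> carrier_vec d"
  shows "(A *\<^sub>v v) \<bullet>c v = quad_form d A (\<lambda>i. v $ i)"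
proof -
  have "(A *\<^sub>v v) \<bullet>c v = (\<Sum>i<d. (\<Sum>k<d. A $$ (i,k) * v $ k) * cnj (v $ i))"
    using assms by (auto simp: scalar_prod_def atLeast0LessThan intro: sum.cong)
  then show ?thesis unfolding quad_form_def by (simp add: sum_distrib_right)
qed

lemma positive_op_iff_quad_form:
  assumes A: "A \<in> carrier_mat d d"
  shows "positive_op d A \<longleftrightarrow> (\<forall>x. 0 \<le> quad_form d A x)"
proof
  assume pos: "positive_op d A"
  show "\<forall>x. 0 \<le> quad_form d A x"
  proof
    fix x
    have "0 \<le> (A *\<^sub>v Matrix.vec d x) \<bullet>c Matrix.vec d x"
      using pos unfolding positive_op_def by auto
    also have "\<dots> = quad_form d A (\<lambda>i. Matrix.vec d x $ i)"
      using A by (simp add: cscalar_prod_mult_mat_vec)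
    also have "\<dots> = quad_form d A x" by (rule quad_form_cong) simp
    finally show "0 \<le> quad_form d A x" .
  qed
next
  assume "\<forall>x. 0 \<le> quad_form d A x"
  then show "positive_op d A"
    unfolding positive_op_def using A cscalar_prod_mult_mat_vec[OF A] by auto
qed

lemma nonneg_complex_eq_Re: "0 \<le> (z::complex) \<Longrightarrow> z = complex_of_real (Re z)"
  by (intro complex_eqI) (auto simp: less_eq_complex_def)

section \<open>The Rayleigh principle\<close>

lemma nonneg_linear_plus_quadratic_imp_zero:
  fixes r g :: real
  assumes H: "\<forall>s. 0 \<le> s * r + s^2 * g"
  shows "r = 0"
proof (rule ccontr)
  assume r: "r \<noteq> 0"
  define a where "a = \<bar>g\<bar> + 1"
  have a: "a > 0" by (simp add: a_def)
  define s where "s = - r / a"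
  have "s * r + s^2 * g \<le> s * r + s^2 * (a - 1)"
    unfolding a_def by (intro add_left_mono mult_left_mono) auto
  also have "\<dots> = - (r^2) / a^2"
    using a by (simp add: s_def power2_eq_square field_simps)
  also have "\<dots> < 0" using r a by simp
  finally show False using H by (metis not_less)
qed

lemma nonneg_sesquilinear_imp_cross_term_zero:
  fixes \<alpha> \<beta> \<gamma> :: complex
  assumes H: "\<forall>c. 0 \<le> c * \<alpha> + cnj c * \<beta> + c * cnj c * \<gamma>" and "0 \<le> \<gamma>"
  shows "\<beta> = 0"
proof -
  from \<open>0 \<le> \<gamma>\<close> have \<gamma>: "Im \<gamma> = 0" by (auto simp: less_eq_complex_def)
  have c1: "Im \<alpha> + Im \<beta> = 0" using H[rule_format, of 1] \<gamma> by (simp add: less_eq_complex_def)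
  have c2: "Re \<alpha> - Re \<beta> = 0" using H[rule_format, of \<i>] \<gamma> by (simp add: less_eq_complex_def)
  have "\<forall>s. 0 \<le> s * (Re \<alpha> + Re \<beta>) + s^2 * Re \<gamma>"
    using H[rule_format, of "complex_of_real _"] \<gamma>
    by (simp add: less_eq_complex_def power2_eq_square algebra_simps)
  then have c3: "Re \<alpha> + Re \<beta> = 0" by (rule nonneg_linear_plus_quadratic_imp_zero)
  have "\<forall>s. 0 \<le> s * (Im \<beta> - Im \<alpha>) + s^2 * Re \<gamma>"
    using H[rule_format, of "\<i> * complex_of_real _"] \<gamma>
    by (simp add: less_eq_complex_def power2_eq_square algebra_simps)
  then have c4: "Im \<beta> - Im \<alpha> = 0" by (rule nonneg_linear_plus_quadratic_imp_zero)
  show ?thesis using c1 c2 c3 c4 by (intro complex_eqI) auto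
qed

text \<open>A positive semidefinite form vanishing at \<open>x\<close> has \<open>x\<close> in the kernel: expand the form at
  \<open>x + c B x\<close>, whose cross term is \<open>\<parallel>B x\<parallel>\<^sup>2\<close>.\<close>

lemma quad_form_nonneg_zero_imp_apply_zero:
  assumes pos: "\<forall>z. 0 \<le> quad_form d B z" and zero: "quad_form d B x = 0"
  shows "\<forall>i<d. (\<Sum>k<d. B $$ (i,k) * x k) = 0"
proof -
  define L where "L = (\<lambda>z i. \<Sum>k<d. B $$ (i,k) * z k)"
  have quad_form_L: "quad_form d B z = (\<Sum>i<d. L z i * cnj (z i))" for z
    unfolding quad_form_def L_def by (simp add: sum_distrib_right)
  have L_linear: "L (\<lambda>i. x i + c * w i) i = L x i + c * L w i" for c w i
    unfolding L_def by (simp add: sum.distrib sum_distrib_left algebra_simps)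
  have expand: "quad_form d B (\<lambda>i. x i + c * w i) = quad_form d B x
      + c * (\<Sum>i<d. L w i * cnj (x i)) + cnj c * (\<Sum>i<d. L x i * cnj (w i))
      + c * cnj c * quad_form d B w" for c w
    unfolding quad_form_L L_linear by (simp add: algebra_simps sum.distrib sum_distrib_left)
  have "\<forall>c. 0 \<le> c * (\<Sum>i<d. L (L x) i * cnj (x i)) + cnj c * (\<Sum>i<d. L x i * cnj (L x i))
      + c * cnj c * quad_form d B (L x)"
    using pos expand zero by (metis add_0)
  then have "(\<Sum>i<d. L x i * cnj (L x i)) = 0"
    using pos by (intro nonneg_sesquilinear_imp_cross_term_zero) auto
  then have "norm2 d (L x) = 0" unfolding of_real_norm2[symmetric] by simp
  then show ?thesis unfolding norm2_eq_0_iff L_def .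
qed

lemma quad_form_attains_min_on_sphere:
  assumes "0 < d"
  obtains x0 where "norm2 d x0 = 1"
    and "\<forall>y. norm2 d y = 1 \<longrightarrow> Re (quad_form d A x0) \<le> Re (quad_form d A y)"
proof -
  define S where "S = (\<lambda>i::nat. if i < d then cball (0::complex) 1 else {0})"
  define K where "K = PiE UNIV S \<inter> {x. norm2 d x = 1}"
  have "compact K"
  proof -
    have "compactin (product_topology (\<lambda>i. euclidean) UNIV) (PiE UNIV S)"
      unfolding compactin_PiE by (auto simp: S_def)
    then have "compact (PiE UNIV S)" by (simp add: euclidean_product_topology)
    moreover have "continuous_on UNIV (norm2 d)" unfolding norm2_def
      by (intro continuous_intros continuous_on_product_coordinates)
    then have "closed {x. norm2 d x = 1}" by (intro closed_Collect_eq) auto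
    ultimately show ?thesis unfolding K_def by (rule compact_Int_closed)
  qed
  define e0 where "e0 = (\<lambda>i::nat. if i = 0 then (1::complex) else 0)"
  have "norm2 d e0 = (\<Sum>i<d. if i = 0 then 1 else 0)"
    unfolding norm2_def e0_def by (intro sum.cong refl) auto
  then have "e0 \<in> K" using \<open>0 < d\<close> by (auto simp: K_def S_def e0_def PiE_iff)
  moreover have "continuous_on K (\<lambda>x. Re (quad_form d A x))" unfolding quad_form_def
    by (intro continuous_intros continuous_on_subset[OF continuous_on_product_coordinates]) auto
  ultimately obtain x0 where x0: "x0 \<in> K" and min: "\<forall>y\<in>K. Re (quad_form d A x0) \<le> Re (quad_form d A y)"
    using continuous_attains_inf[OF \<open>compact K\<close>] by blast
  have "Re (quad_form d A x0) \<le> Re (quad_form d A y)" if y: "norm2 d y = 1" for y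
  proof -
    define y' where "y' = (\<lambda>i. if i < d then y i else 0)"
    have "norm2 d y' = 1" using y norm2_cong[of d y' y] by (simp add: y'_def)
    moreover have "cmod (y i) \<le> 1" if "i < d" for i
    proof -
      have "(cmod (y i))^2 \<le> 1" unfolding y[symmetric] norm2_def
        by (rule member_le_sum) (use that in auto)
      then show ?thesis by (simp add: power_le_one_iff)
    qed
    ultimately have "y' \<in> K" by (auto simp: K_def S_def PiE_iff y'_def)
    moreover have "quad_form d A y' = quad_form d A y" by (rule quad_form_cong) (simp add: y'_def)
    ultimately show ?thesis using min by metis
  qed
  then show ?thesis using that x0 by (auto simp: K_def)
qed

lemma quad_form_lower_bound_of_sphere:
  assumes sphere: "\<forall>y. norm2 d y = 1 \<longrightarrow> m \<le> Re (quad_form d A y)"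
  shows "m * norm2 d x \<le> Re (quad_form d A x)"
proof (cases "norm2 d x = 0")
  case True
  then have "quad_form d A x = 0" by (simp add: norm2_eq_0_iff quad_form_def)
  then show ?thesis using True by simp
next
  case False
  then have pos: "0 < norm2 d x" using norm2_nonneg[of d x] by linarith
  define c where "c = complex_of_real (1 / sqrt (norm2 d x))"
  have "cmod c = 1 / sqrt (norm2 d x)" unfolding c_def using pos by (simp add: norm_divide)
  then have c2: "(cmod c)^2 = 1 / norm2 d x" using pos by (simp add: power_divide)
  have "m \<le> Re (quad_form d A (\<lambda>i. c * x i))"
    using sphere pos by (simp add: norm2_scale c2)
  then show ?thesis using pos by (simp add: quad_form_scale c2 field_simps)
qed

lemma eigenvalueI_fun:
  assumes A: "A \<in> carrier_mat d d"
    and eq: "\<forall>i<d. (\<Sum>k<d. A $$ (i,k) * x k) = c * x i" and "i0 < d" "x i0 \<noteq> 0"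
  shows "eigenvalue A c"
  unfolding eigenvalue_def eigenvector_def
proof (intro exI conjI)
  show "Matrix.vec d x \<in> carrier_vec (dim_row A)" using A by simp
  show "Matrix.vec d x \<noteq> 0\<^sub>v (dim_row A)"
    using A \<open>i0 < d\<close> \<open>x i0 \<noteq> 0\<close> by (metis carrier_matD(1) index_vec index_zero_vec(1))
  show "A *\<^sub>v Matrix.vec d x = c \<cdot>\<^sub>v Matrix.vec d x"
    using A eq by (intro eq_vecI) (auto simp: scalar_prod_def atLeast0LessThan)
qed

lemma positive_op_min_eigenvalue:
  assumes A: "positive_op d A" and "0 < d"
  obtains m where "eigenvalue A (complex_of_real m)"
    and "\<forall>x. m * norm2 d x \<le> Re (quad_form d A x)"
proof -
  have Acar: "A \<in> carrier_mat d d" using A unfolding positive_op_def by simp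
  have real: "quad_form d A z = complex_of_real (Re (quad_form d A z))" for z
    using A Acar by (intro nonneg_complex_eq_Re) (simp add: positive_op_iff_quad_form)
  obtain x0 where x0: "norm2 d x0 = 1"
    and min: "\<forall>y. norm2 d y = 1 \<longrightarrow> Re (quad_form d A x0) \<le> Re (quad_form d A y)"
    using quad_form_attains_min_on_sphere[OF \<open>0 < d\<close>] by blast
  define m where "m = Re (quad_form d A x0)"
  have bound: "\<forall>x. m * norm2 d x \<le> Re (quad_form d A x)"
    using min unfolding m_def by (blast intro: quad_form_lower_bound_of_sphere)
  define B where "B = A - complex_of_real m \<cdot>\<^sub>m 1\<^sub>m d"
  have quad_form_B: "quad_form d B z = complex_of_real (Re (quad_form d A z) - m * norm2 d z)" for z
    unfolding B_def using Acar
    by (subst quad_form_minus) (auto simp: quad_form_smult quad_form_one, subst real, simp)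
  have "\<forall>i<d. (\<Sum>k<d. B $$ (i,k) * x0 k) = 0"
    using bound x0 by (intro quad_form_nonneg_zero_imp_apply_zero)
      (auto simp: quad_form_B less_eq_complex_def m_def)
  moreover have "(\<Sum>k<d. B $$ (i,k) * x0 k) = (\<Sum>k<d. A $$ (i,k) * x0 k) - complex_of_real m * x0 i"
    if "i < d" for i
  proof -
    have "(\<Sum>k<d. B $$ (i,k) * x0 k) =
        (\<Sum>k<d. A $$ (i,k) * x0 k - (if k = i then complex_of_real m * x0 i else 0))"
      unfolding B_def using Acar that by (intro sum.cong) (auto simp: left_diff_distrib)
    then show ?thesis using that by (simp add: sum_subtractf)
  qed
  ultimately have "\<forall>i<d. (\<Sum>k<d. A $$ (i,k) * x0 k) = complex_of_real m * x0 i" by simp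
  moreover obtain i0 where "i0 < d" "x0 i0 \<noteq> 0" using x0 norm2_eq_0_iff[of d x0] by auto
  ultimately have "eigenvalue A (complex_of_real m)" using Acar by (intro eigenvalueI_fun)
  then show ?thesis using that bound by blast
qed

lemma eigenvalue_quad_form:
  assumes A: "A \<in> carrier_mat d d" and "eigenvalue A (complex_of_real lam)"
  obtains x where "0 < norm2 d x" and "quad_form d A x = complex_of_real (lam * norm2 d x)"
proof -
  obtain v where v: "v \<in> carrier_vec d" "v \<noteq> 0\<^sub>v d" "A *\<^sub>v v = complex_of_real lam \<cdot>\<^sub>v v"
    using assms unfolding eigenvalue_def eigenvector_def by auto
  have vv: "v \<bullet>c v = complex_of_real (norm2 d (\<lambda>i. v $ i))"
    using v(1) unfolding of_real_norm2 by (simp add: scalar_prod_def atLeast0LessThan)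
  have "quad_form d A (\<lambda>i. v $ i) = complex_of_real lam * (v \<bullet>c v)"
    using v by (simp add: cscalar_prod_mult_mat_vec[OF A, symmetric])
  then have "quad_form d A (\<lambda>i. v $ i) = complex_of_real (lam * norm2 d (\<lambda>i. v $ i))"
    using vv by simp
  moreover have "norm2 d (\<lambda>i. v $ i) \<noteq> 0"
    using v(1,2) by (auto simp: norm2_eq_0_iff)
  ultimately show ?thesis using that norm2_nonneg by (metis less_eq_real_def)
qed

lemma finite_real_eigenvalues:
  assumes "A \<in> carrier_mat d d"
  shows "finite {lam :: real. eigenvalue A (complex_of_real lam)}"
proof -
  have "char_poly A \<noteq> 0"
    using degree_monic_char_poly[OF assms] by auto
  then have "finite (complex_of_real -` {z. poly (char_poly A) z = 0})"
    by (intro finite_vimageI poly_roots_finite) (auto intro: injI)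
  moreover have "{lam. eigenvalue A (complex_of_real lam)} \<subseteq> complex_of_real -` {z. poly (char_poly A) z = 0}"
    using eigenvalue_root_char_poly[OF assms] by auto
  ultimately show ?thesis by (rule finite_subset[rotated])
qed

section \<open>Observables\<close>

lemma foldr_add_mat:
  assumes "\<forall>j\<in>set xs. f j \<in> carrier_mat d d"
  shows "foldr (+) (map f xs) (0\<^sub>m d d) \<in> carrier_mat d d \<and>
    (\<forall>i<d. \<forall>k<d. foldr (+) (map f xs) (0\<^sub>m d d) $$ (i,k) = (\<Sum>j\<leftarrow>xs. f j $$ (i,k)))"
  using assms by (induction xs) auto

lemma observables_carrier: "X \<in> observables d n \<Longrightarrow> X j \<in> carrier_mat d d"
  unfolding observables_def positive_op_def by (cases "j < n") auto

lemma observables_iff_sum_entries: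
  assumes car: "\<And>j. X j \<in> carrier_mat d d"
  shows "X \<in> observables d n \<longleftrightarrow> (\<forall>j<n. positive_op d (X j)) \<and> (\<forall>j\<ge>n. X j = 0\<^sub>m d d)
    \<and> (\<forall>i<d. \<forall>k<d. (\<Sum>j<n. X j $$ (i,k)) = 1\<^sub>m d $$ (i,k))"
proof -
  have "(\<Sum>j\<leftarrow>[0..<n]. X j $$ (i,k)) = (\<Sum>j<n. X j $$ (i,k))" for i k
    by (metis atLeast0LessThan set_upt sum_set_upt_conv_sum_list_nat)
  then have "foldr (+) (map X [0..<n]) (0\<^sub>m d d) \<in> carrier_mat d d \<and>
    (\<forall>i<d. \<forall>k<d. foldr (+) (map X [0..<n]) (0\<^sub>m d d) $$ (i,k) = (\<Sum>j<n. X j $$ (i,k)))"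
    using foldr_add_mat[of "[0..<n]" X d] car by auto
  then have "foldr (+) (map X [0..<n]) (0\<^sub>m d d) = 1\<^sub>m d \<longleftrightarrow>
      (\<forall>i<d. \<forall>k<d. (\<Sum>j<n. X j $$ (i,k)) = 1\<^sub>m d $$ (i,k))"
    by (auto simp del: index_one_mat(1))
  then show ?thesis unfolding observables_def by blast
qed

lemma observables_sum_entries:
  assumes "X \<in> observables d n"
  shows "\<forall>i<d. \<forall>k<d. (\<Sum>j<n. X j $$ (i,k)) = 1\<^sub>m d $$ (i,k)"
  using observables_iff_sum_entries[of X d n] observables_carrier[OF assms] assms by blast

lemma observables_quad_form_nonneg:
  assumes "X \<in> observables d n" and "j < n"
  shows "0 \<le> quad_form d (X j) x"
  using positive_op_iff_quad_form[OF observables_carrier[OF assms(1)]] assms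
  unfolding observables_def by blast

lemma observables_quad_form_le:
  assumes X: "X \<in> observables d n" and "j < n"
  shows "Re (quad_form d (X j) x) \<le> norm2 d x"
proof -
  have "Re (quad_form d (X j) x) \<le> (\<Sum>l<n. Re (quad_form d (X l) x))"
    using observables_quad_form_nonneg[OF X] \<open>j < n\<close>
    by (intro member_le_sum) (auto simp: less_eq_complex_def)
  also have "\<dots> = Re (\<Sum>l<n. quad_form d (X l) x)" by simp
  also have "\<dots> = Re (quad_form d (1\<^sub>m d) x)"
    using observables_sum_entries[OF X] by (subst quad_form_sum_entries) auto
  finally show ?thesis by (simp add: quad_form_one)
qed

lemma observables_eigenvalue_bounds:
  assumes C: "C \<in> observables d n" and "j < n" and "eigenvalue (C j) (complex_of_real lam)"
  shows "0 \<le> lam" "lam \<le> 1"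
proof -
  obtain u where u: "0 < norm2 d u" "quad_form d (C j) u = complex_of_real (lam * norm2 d u)"
    using eigenvalue_quad_form observables_carrier[OF C] assms(3) by metis
  have "0 \<le> lam * norm2 d u"
    using observables_quad_form_nonneg[OF C \<open>j < n\<close>, of u] u by (simp add: less_eq_complex_def)
  then show "0 \<le> lam" using u(1) by (simp add: zero_le_mult_iff)
  have "lam * norm2 d u \<le> 1 * norm2 d u"
    using observables_quad_form_le[OF C \<open>j < n\<close>, of u] u by simp
  then show "lam \<le> 1" using u(1) by simp
qed

lemma observables_outcomes_pos:
  assumes "0 < d" and "X \<in> observables d n"
  shows "0 < n"
  using observables_sum_entries[OF assms(2), rule_format, of 0 0] assms(1) by (cases n) auto

definition trivial_observable :: "nat \<Rightarrow> nat \<Rightarrow> nat \<Rightarrow> complex mat" where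
  "trivial_observable d j0 = (\<lambda>j. if j = j0 then 1\<^sub>m d else 0\<^sub>m d d)"

lemma trivial_observable_in_observables:
  assumes "j0 < n"
  shows "trivial_observable d j0 \<in> observables d n"
proof -
  have "positive_op d (1\<^sub>m d)" "positive_op d (0\<^sub>m d d)"
    by (simp_all add: positive_op_iff_quad_form quad_form_one quad_form_zero
        less_eq_complex_def norm2_nonneg)
  moreover have "(\<Sum>j<n. trivial_observable d j0 j $$ (i,k)) = 1\<^sub>m d $$ (i,k)" if "i < d" "k < d" for i k
  proof -
    have "(\<Sum>j<n. trivial_observable d j0 j $$ (i,k)) = (\<Sum>j<n. if j = j0 then 1\<^sub>m d $$ (i,k) else 0)"
      using that by (intro sum.cong) (auto simp: trivial_observable_def)
    then show ?thesis using assms by simp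
  qed
  ultimately show ?thesis using assms
    by (subst observables_iff_sum_entries) (auto simp: trivial_observable_def)
qed

section \<open>Weights\<close>

lemma obs_comb_0:
  assumes "C \<in> observables d n" "X \<in> observables d n"
  shows "obs_comb 0 C X = C"
proof
  fix j
  have "C j \<in> carrier_mat d d" "X j \<in> carrier_mat d d"
    using assms by (simp_all add: observables_carrier)
  then show "obs_comb 0 C X j = C j" by (auto simp: obs_comb_def)
qed

lemma quad_form_obs_comb:
  assumes "C j \<in> carrier_mat d d" "X j \<in> carrier_mat d d"
  shows "quad_form d (obs_comb t C X j) x =
    complex_of_real (1 / (1 - t)) * (quad_form d (C j) x - complex_of_real t * quad_form d (X j) x)"
  unfolding obs_comb_def using assms
  by (simp add: quad_form_smult minus_carrier_mat quad_form_minus del: of_real_divide)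

lemma obs_comb_in_observables:
  assumes C: "C \<in> observables d n" and X: "X \<in> observables d n" and t: "0 \<le> t" "t < 1"
    and bound: "\<forall>j<n. \<forall>x. t * norm2 d x \<le> Re (quad_form d (C j) x)"
  shows "obs_comb t C X \<in> observables d n"
proof -
  define c where "c = 1 / (1 - t)"
  have c: "0 < c" "c * (1 - t) = 1" using t by (auto simp: c_def)
  note car = observables_carrier[OF C] observables_carrier[OF X]
  have comb: "obs_comb t C X j = complex_of_real c \<cdot>\<^sub>m (C j - complex_of_real t \<cdot>\<^sub>m X j)" for j
    unfolding obs_comb_def c_def ..
  have comb_car: "obs_comb t C X j \<in> carrier_mat d d" for j
    unfolding comb using car by (intro smult_carrier_mat minus_carrier_mat) auto
  have "0 \<le> quad_form d (obs_comb t C X j) x" if "j < n" for j x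
  proof -
    have "Im (quad_form d (C j) x) = 0" "Im (quad_form d (X j) x) = 0"
      using observables_quad_form_nonneg[OF C that] observables_quad_form_nonneg[OF X that]
      by (simp_all add: less_eq_complex_def)
    have "t * Re (quad_form d (X j) x) \<le> t * norm2 d x"
      using observables_quad_form_le[OF X that] t(1) by (rule mult_left_mono)
    also have "\<dots> \<le> Re (quad_form d (C j) x)" using bound that by blast
    finally have "0 \<le> c * (Re (quad_form d (C j) x) - t * Re (quad_form d (X j) x))"
      using c by simp
    moreover have "quad_form d (obs_comb t C X j) x =
        complex_of_real c * (quad_form d (C j) x - complex_of_real t * quad_form d (X j) x)"
      using car by (simp add: quad_form_obs_comb c_def)
    ultimately show ?thesis using \<open>Im (quad_form d (C j) x) = 0\<close> \<open>Im (quad_form d (X j) x) = 0\<close>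
      by (simp add: less_eq_complex_def)
  qed
  then have "positive_op d (obs_comb t C X j)" if "j < n" for j
    using that comb_car positive_op_iff_quad_form by blast
  moreover have "obs_comb t C X j = 0\<^sub>m d d" if "n \<le> j" for j
    using C X that unfolding comb observables_def by auto
  moreover have "(\<Sum>j<n. obs_comb t C X j $$ (i,k)) = 1\<^sub>m d $$ (i,k)" if "i < d" "k < d" for i k
  proof -
    have "(\<Sum>j<n. obs_comb t C X j $$ (i,k)) =
        (\<Sum>j<n. complex_of_real c * (C j $$ (i,k) - complex_of_real t * X j $$ (i,k)))"
      unfolding comb using that carrier_matD[OF car(1)] carrier_matD[OF car(2)]
      by (intro sum.cong) auto
    also have "\<dots> =
        complex_of_real c * ((\<Sum>j<n. C j $$ (i,k)) - complex_of_real t * (\<Sum>j<n. X j $$ (i,k)))"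
      by (simp add: sum_distrib_left sum_subtractf right_diff_distrib)
    also have "\<dots> = complex_of_real (c * (1 - t)) * 1\<^sub>m d $$ (i,k)"
      using observables_sum_entries[OF C] observables_sum_entries[OF X] that
      by (simp add: algebra_simps)
    finally show ?thesis using c by simp
  qed
  ultimately show ?thesis using comb_car by (subst observables_iff_sum_entries) auto
qed

lemma weight_nonneg:
  assumes "C \<in> observables d n" "X \<in> observables d n"
  shows "0 \<le> weight d n C X"
  unfolding weight_def using obs_comb_0[OF assms] assms(1)
  by (intro cSup_upper bdd_aboveI[of _ 1]) auto

lemma weight_ge:
  assumes C: "C \<in> observables d n" and X: "X \<in> observables d n" and "mu \<le> 1"
    and bound: "\<forall>j<n. \<forall>x. mu * norm2 d x \<le> Re (quad_form d (C j) x)"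
  shows "mu \<le> weight d n C X"
proof (cases "0 < mu")
  case True
  show ?thesis
  proof (rule dense_le_bounded[OF True])
    fix t assume t: "0 < t" "t < mu"
    have "\<forall>j<n. \<forall>x. t * norm2 d x \<le> Re (quad_form d (C j) x)"
    proof (intro allI impI)
      fix j x assume "j < n"
      have "t * norm2 d x \<le> mu * norm2 d x" using t norm2_nonneg by (intro mult_right_mono) auto
      also have "\<dots> \<le> Re (quad_form d (C j) x)" using bound \<open>j < n\<close> by blast
      finally show "t * norm2 d x \<le> Re (quad_form d (C j) x)" .
    qed
    then have "obs_comb t C X \<in> observables d n"
      using t \<open>mu \<le> 1\<close> by (intro obs_comb_in_observables[OF C X]) auto
    then show "t \<le> weight d n C X"
      unfolding weight_def using t \<open>mu \<le> 1\<close> by (intro cSup_upper bdd_aboveI[of _ 1]) auto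
  qed
next
  case False
  then show ?thesis using weight_nonneg[OF C X] by linarith
qed

lemma weight_trivial_observable_le:
  assumes C: "C \<in> observables d n" and "j0 < n" and eig: "eigenvalue (C j0) (complex_of_real lam)"
  shows "weight d n C (trivial_observable d j0) \<le> lam"
  unfolding weight_def
proof (rule cSup_least)
  show "{t. 0 \<le> t \<and> t < 1 \<and> obs_comb t C (trivial_observable d j0) \<in> observables d n} \<noteq> {}"
    using obs_comb_0[OF C trivial_observable_in_observables] C \<open>j0 < n\<close> by force
  fix t assume "t \<in> {t. 0 \<le> t \<and> t < 1 \<and> obs_comb t C (trivial_observable d j0) \<in> observables d n}"
  then have t: "0 \<le> t" "t < 1" and comb: "obs_comb t C (trivial_observable d j0) \<in> observables d n"
    by auto
  obtain u where u: "0 < norm2 d u" "quad_form d (C j0) u = complex_of_real (lam * norm2 d u)"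
    using eigenvalue_quad_form observables_carrier[OF C] eig by metis
  have "0 \<le> Re (quad_form d (obs_comb t C (trivial_observable d j0) j0) u)"
    using observables_quad_form_nonneg[OF comb \<open>j0 < n\<close>] by (simp add: less_eq_complex_def)
  also have "\<dots> = 1 / (1 - t) * ((lam - t) * norm2 d u)"
    using observables_carrier[OF C] u(2)
    by (simp add: quad_form_obs_comb trivial_observable_def quad_form_one algebra_simps
        del: of_real_divide)
  finally have "0 \<le> 1 / (1 - t) * ((lam - t) * norm2 d u)" .
  then show "t \<le> lam" using t u(1) by (simp add: zero_le_divide_iff zero_le_mult_iff)
qed

lemma observables_min_eigenvalue:
  assumes "0 < d" and C: "C \<in> observables d n"
  defines "mu \<equiv> Min {lam :: real. \<exists>j<n. eigenvalue (C j) (complex_of_real lam)}"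
  shows "\<exists>j0<n. eigenvalue (C j0) (complex_of_real mu)"
    and "\<forall>j<n. \<forall>x. mu * norm2 d x \<le> Re (quad_form d (C j) x)"
proof -
  define S where "S = {lam :: real. \<exists>j<n. eigenvalue (C j) (complex_of_real lam)}"
  have min_eigenvalue: "\<exists>m\<in>S. \<forall>x. m * norm2 d x \<le> Re (quad_form d (C j) x)" if j: "j < n" for j
  proof -
    have "positive_op d (C j)" using C j unfolding observables_def by blast
    then obtain m where "eigenvalue (C j) (complex_of_real m)"
      and "\<forall>x. m * norm2 d x \<le> Re (quad_form d (C j) x)"
      using positive_op_min_eigenvalue \<open>0 < d\<close> by blast
    then show ?thesis using j unfolding S_def by blast
  qed
  have "finite S"
    unfolding S_def using finite_real_eigenvalues[OF observables_carrier[OF C]] by auto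
  moreover have "S \<noteq> {}" using min_eigenvalue[OF observables_outcomes_pos[OF \<open>0 < d\<close> C]] by blast
  ultimately show "\<exists>j0<n. eigenvalue (C j0) (complex_of_real mu)"
    using Min_in unfolding mu_def S_def by blast
  show "\<forall>j<n. \<forall>x. mu * norm2 d x \<le> Re (quad_form d (C j) x)"
  proof (intro allI impI)
    fix j x assume "j < n"
    then obtain m where "m \<in> S" and m: "\<forall>x. m * norm2 d x \<le> Re (quad_form d (C j) x)"
      using min_eigenvalue by blast
    have "mu * norm2 d x \<le> m * norm2 d x"
      using Min_le[OF \<open>finite S\<close> \<open>m \<in> S\<close>] norm2_nonneg unfolding mu_def S_def
      by (rule mult_right_mono)
    also have "\<dots> \<le> Re (quad_form d (C j) x)" using m by blast
    finally show "mu * norm2 d x \<le> Re (quad_form d (C j) x)" .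
  qed
qed

theorem proposition4:
  fixes d n :: nat and C :: "nat \<Rightarrow> complex mat"
  assumes "0 < d"
    and "C \<in> observables d n"
  shows "boundariness d n C =
    Min {lam :: real. \<exists>j<n. eigenvalue (C j) (complex_of_real lam)}"
proof -
  note C = assms(2)
  define mu where "mu = Min {lam :: real. \<exists>j<n. eigenvalue (C j) (complex_of_real lam)}"
  obtain j0 where j0: "j0 < n" "eigenvalue (C j0) (complex_of_real mu)"
    using observables_min_eigenvalue(1)[OF assms] unfolding mu_def by blast
  have bound: "\<forall>j<n. \<forall>x. mu * norm2 d x \<le> Re (quad_form d (C j) x)"
    using observables_min_eigenvalue(2)[OF assms] unfolding mu_def .
  have "bdd_below (weight d n C ` observables d n)"
    using weight_nonneg[OF C] by (rule bdd_belowI2)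
  then have "boundariness d n C \<le> weight d n C (trivial_observable d j0)"
    unfolding boundariness_def by (intro cInf_lower imageI trivial_observable_in_observables j0(1))
  also have "\<dots> \<le> mu" using weight_trivial_observable_le[OF C j0] .
  finally have "boundariness d n C \<le> mu" .
  moreover have "mu \<le> boundariness d n C"
    unfolding boundariness_def
    using C observables_eigenvalue_bounds[OF C j0] weight_ge[OF C _ _ bound]
    by (intro cInf_greatest) auto
  ultimately show ?thesis unfolding mu_def by simp
qed

end
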